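(* Suppose $M:\alpha\mapsto M_\alpha=(E,\mathcal{B}_\alpha)$ is a matroid flock with support matroid $N=(E,\mathcal{B})$. Then $\mathcal{B}=\bigcup_{\alpha\in\mathbb{Z}^E}\mathcal{B}_\alpha$.
   Context: $E$ is a finite set; $(E,\mathcal{B})$ denotes the matroid on $E$ with basis set $\mathcal{B}$. $e_I:=\sum_{i\in I}e_i$ ($e_i$ unit vectors), $\mathbf{1}:=e_E$. A matroid flock of rank $d$ on $E$ is a map $M$ assigning to each $\alpha\in\mathbb{Z}^E$ a matroid $M_\alpha$ on $E$ of rank $d$ with (MF1) $M_\alpha/i=M_{\alpha+e_i}\setminus i$ for all $\alpha$, $i$ (contraction, deletion); and (MF2) $M_\alpha=M_{\alpha+\mathbf{1}}$. With $r_\alpha$ the rank function of $M_\alpha$, let $g$ be the unique function $\mathbb{Z}^E\to\mathbb{Z}$ with $g(0)=0$ and $g(\alpha+e_I)=g(\alpha)+r_\alpha(I)$ for all $\alpha,I$; for $d$-subsets $B$ of $E$ put $\nu^M(B):=\sup\{e_B^T\alpha-g(\alpha):\alpha\in\mathbb{Z}^E\}\in\mathbb{Z}\cup\{\infty\}$. The support matroid of $M$ is the matroid on $E$ whose bases are the $d$-subsets $B$ with $\nu^M(B)<\infty$. *)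

theory Defs
  imports Complex_Main "HOL-Library.Extended_Real"
begin

text \<open>Ground set E is the (finite) universe of the type 'a. A matroid on a ground set
  is represented by its set of bases.\<close>

definition matroid_bases :: "'a set \<Rightarrow> 'a set set \<Rightarrow> bool" where
  "matroid_bases E Bs \<longleftrightarrow> Bs \<noteq> {} \<and> (\<forall>B\<in>Bs. B \<subseteq> E) \<and>
     (\<forall>B1\<in>Bs. \<forall>B2\<in>Bs. \<forall>x\<in>B1 - B2. \<exists>y\<in>B2 - B1. insert y (B1 - {x}) \<in> Bs)"

definition matroid_rank_d :: "'a set \<Rightarrow> nat \<Rightarrow> 'a set set \<Rightarrow> bool" where
  "matroid_rank_d E d Bs \<longleftrightarrow> matroid_bases E Bs \<and> (\<forall>B\<in>Bs. card B = d)"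

definition contract :: "'a set set \<Rightarrow> 'a \<Rightarrow> 'a set set" where
  "contract Bs i = (if \<exists>B\<in>Bs. i \<in> B then {B - {i} | B. B \<in> Bs \<and> i \<in> B} else Bs)"

definition delete :: "'a set set \<Rightarrow> 'a \<Rightarrow> 'a set set" where
  "delete Bs i = (if \<exists>B\<in>Bs. i \<notin> B then {B \<in> Bs. i \<notin> B} else {B - {i} | B. B \<in> Bs})"

definition mrank :: "'a set set \<Rightarrow> 'a set \<Rightarrow> nat" where
  "mrank Bs I = Max ((\<lambda>B. card (I \<inter> B)) ` Bs)"

definition unitv :: "'a \<Rightarrow> 'a \<Rightarrow> int" where
  "unitv i = (\<lambda>j. if j = i then 1 else 0)"

definition indv :: "'a set \<Rightarrow> 'a \<Rightarrow> int" where
  "indv I = (\<lambda>j. if j \<in> I then 1 else 0)"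

definition matroid_flock :: "nat \<Rightarrow> (('a::finite \<Rightarrow> int) \<Rightarrow> 'a set set) \<Rightarrow> bool" where
  "matroid_flock d M \<longleftrightarrow>
     (\<forall>\<alpha>. matroid_rank_d UNIV d (M \<alpha>)) \<and>
     (\<forall>\<alpha> i. contract (M \<alpha>) i = delete (M (\<lambda>j. \<alpha> j + unitv i j)) i) \<and>
     (\<forall>\<alpha>. M \<alpha> = M (\<lambda>j. \<alpha> j + 1))"

definition flock_g :: "(('a::finite \<Rightarrow> int) \<Rightarrow> 'a set set) \<Rightarrow> ('a \<Rightarrow> int) \<Rightarrow> int" where
  "flock_g M = (THE g. g (\<lambda>_. 0) = 0 \<and>
      (\<forall>\<alpha> I. g (\<lambda>j. \<alpha> j + indv I j) = g \<alpha> + int (mrank (M \<alpha>) I)))"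

definition flock_nu :: "(('a::finite \<Rightarrow> int) \<Rightarrow> 'a set set) \<Rightarrow> 'a set \<Rightarrow> ereal" where
  "flock_nu M B = (SUP \<alpha>. ereal (of_int ((\<Sum>i\<in>B. \<alpha> i) - flock_g M \<alpha>)))"

definition support_bases :: "nat \<Rightarrow> (('a::finite \<Rightarrow> int) \<Rightarrow> 'a set set) \<Rightarrow> 'a set set" where
  "support_bases d M = {B. card B = d \<and> flock_nu M B < \<infinity>}"

end

(*
  Write r_alpha for the rank function of M_alpha. By (MF1) and the rank formulas for
  contraction and deletion, r_alpha (insert i Y) = r_alpha {i} + r_(alpha + e_i) Y for i \<notin> Y.
  This identity makes the layer sum  L d + \<Sum>_(L \<le> t < U) r_(min alpha t) {j. t < alpha_j}
  (for L \<le> alpha \<le> U) satisfy the recursion defining g, so it is g; in particular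
  g (alpha + e_i) = g alpha + r_alpha {i}.

  Hence the objective e_B . alpha - g alpha of nu(B) changes by [i \<in> B] - r_alpha {i} under
  alpha \<mapsto> alpha + e_i. If B is a basis of M_beta, raising beta inside B keeps B a basis and the
  objective constant, raising it outside B never increases it, and adding 1 to all coordinates
  leaves it unchanged; so the objective is maximal at beta and nu(B) < \<infinity>. If B is a basis of
  no M_alpha, then r_alpha B \<le> d - 1 everywhere and the objective grows without bound along
  the multiples of e_B.
*)

theory Submission
  imports Defs "HOL-Library.Function_Algebras"
begin

section \<open>Bases and rank\<close>

lemma card_Int_le_mrank: "B \<in> Bs \<Longrightarrow> card (I \<inter> B) \<le> mrank (Bs :: 'a::finite set set) I"
  unfolding mrank_def by (rule Max_ge) auto

lemma mrank_attained:
  "Bs \<noteq> {} \<Longrightarrow> \<exists>B\<in>Bs. mrank (Bs :: 'a::finite set set) I = card (I \<inter> B)"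
proof -
  assume "Bs \<noteq> {}"
  then have "mrank Bs I \<in> (\<lambda>B. card (I \<inter> B)) ` Bs" unfolding mrank_def by (intro Max_in) auto
  then show ?thesis by auto
qed

context
  fixes Bs :: "'a::finite set set" and d :: nat
  assumes bases: "matroid_rank_d UNIV d Bs"
begin

lemma bases_nonempty: "Bs \<noteq> {}"
  using bases unfolding matroid_rank_d_def matroid_bases_def by auto

lemma card_basis: "B \<in> Bs \<Longrightarrow> card B = d"
  using bases unfolding matroid_rank_d_def by auto

lemma basis_exchange:
  "B1 \<in> Bs \<Longrightarrow> B2 \<in> Bs \<Longrightarrow> x \<in> B1 - B2 \<Longrightarrow> \<exists>y\<in>B2 - B1. insert y (B1 - {x}) \<in> Bs"
  using bases unfolding matroid_rank_d_def matroid_bases_def by blast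

lemma mrank_UNIV: "mrank Bs UNIV = d"
  using mrank_attained[OF bases_nonempty, of UNIV] card_basis by auto

lemma mrank_empty: "mrank Bs {} = 0"
  using mrank_attained[OF bases_nonempty, of "{}"] by auto

lemma mrank_singleton: "mrank Bs {i} = (if \<exists>B\<in>Bs. i \<in> B then 1 else 0)"
proof -
  obtain B where "B \<in> Bs" "mrank Bs {i} = card ({i} \<inter> B)"
    using mrank_attained[OF bases_nonempty] by blast
  moreover have "card ({i} \<inter> B') \<le> mrank Bs {i}" if "B' \<in> Bs" for B'
    using card_Int_le_mrank that .
  moreover have "card ({i} \<inter> B) \<le> 1" by (simp add: card_le_Suc0_iff_eq)
  ultimately show ?thesis by (fastforce split: if_splits)
qed

lemma mrank_less_card_if_not_basis:
  assumes "card B = d" "B \<notin> Bs" shows "mrank Bs B < d"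
proof -
  obtain B' where B': "B' \<in> Bs" "mrank Bs B = card (B \<inter> B')"
    using mrank_attained[OF bases_nonempty] by blast
  have "card (B \<inter> B') \<le> d" using card_basis[OF B'(1)] by (metis card_mono finite Int_lower2)
  moreover have "card (B \<inter> B') \<noteq> d"
  proof
    assume "card (B \<inter> B') = d"
    then have "B \<inter> B' = B" using assms(1) by (intro card_subset_eq) auto
    moreover have "B \<inter> B' = B'" using \<open>card (B \<inter> B') = d\<close> card_basis[OF B'(1)]
      by (intro card_subset_eq) auto
    ultimately show False using assms(2) B'(1) by simp
  qed
  ultimately show ?thesis using B'(2) by simp
qed

lemma mrank_delete:
  assumes "i \<notin> Y" shows "mrank (delete Bs i) Y = mrank Bs Y"
proof (cases "\<exists>B\<in>Bs. i \<notin> B")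
  case True
  then have D: "delete Bs i = {B\<in>Bs. i \<notin> B}" by (simp add: delete_def)
  show ?thesis
  proof (rule antisym)
    obtain B where "B \<in> delete Bs i" "mrank (delete Bs i) Y = card (Y \<inter> B)"
      using mrank_attained[of "delete Bs i" Y] D True by auto
    then show "mrank (delete Bs i) Y \<le> mrank Bs Y" using card_Int_le_mrank D by auto
  next
    obtain B where B: "B \<in> Bs" "mrank Bs Y = card (Y \<inter> B)"
      using mrank_attained[OF bases_nonempty] by blast
    obtain B' where "B' \<in> delete Bs i" "Y \<inter> B \<subseteq> B'"
    proof (cases "i \<in> B")
      case False
      then show ?thesis using that D B by auto
    next
      case iB: True
      obtain B0 where "B0 \<in> Bs" "i \<notin> B0" using True by blast
      then obtain y where "y \<in> B0 - B" "insert y (B - {i}) \<in> Bs"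
        using basis_exchange[of B B0 i] B iB by blast
      then show ?thesis using that[of "insert y (B - {i})"] D \<open>i \<notin> B0\<close> assms by auto
    qed
    then have "card (Y \<inter> B) \<le> card (Y \<inter> B')" by (intro card_mono) auto
    then show "mrank Bs Y \<le> mrank (delete Bs i) Y"
      using B card_Int_le_mrank[OF \<open>B' \<in> delete Bs i\<close>, of Y] by simp
  qed
next
  case False
  then have "delete Bs i = (\<lambda>B. B - {i}) ` Bs" by (auto simp: delete_def)
  moreover have "Y \<inter> (B - {i}) = Y \<inter> B" for B using assms by auto
  ultimately show ?thesis unfolding mrank_def by (simp add: image_image)
qed

lemma exists_basis_Diff_eq_singleton:
  assumes "B \<in> Bs" "B0 \<in> Bs" "i \<in> B0" "i \<notin> B"
  shows "\<exists>C\<in>Bs. C - B = {i}"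
proof -
  let ?S = "{C\<in>Bs. i \<in> C}"
  obtain C where C: "C \<in> ?S" and C_max: "\<And>C'. C' \<in> ?S \<Longrightarrow> card (C' \<inter> B) \<le> card (C \<inter> B)"
  proof -
    have "card (C' \<inter> B) < Suc (card B)" for C' by (simp add: card_mono le_imp_less_Suc)
    then show ?thesis
      using that ex_has_greatest_nat[of "\<lambda>C. C \<in> ?S" B0 "\<lambda>C. card (C \<inter> B)"] assms by blast
  qed
  have "x = i" if x: "x \<in> C - B" for x
  proof (rule ccontr)
    assume "x \<noteq> i"
    obtain y where y: "y \<in> B - C" "insert y (C - {x}) \<in> Bs"
      using basis_exchange[of C B x] C assms(1) x by blast
    have "insert y (C - {x}) \<inter> B = insert y (C \<inter> B)" using x y by auto
    then have "card (insert y (C - {x}) \<inter> B) = Suc (card (C \<inter> B))" using y by simp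
    moreover have "insert y (C - {x}) \<in> ?S" using C \<open>x \<noteq> i\<close> y(2) by auto
    ultimately show False using C_max by fastforce
  qed
  then have "C - B = {i}" using C assms(4) by blast
  then show ?thesis using C by blast
qed

lemma card_Int_le_of_Diff_eq_singleton:
  assumes "B \<in> Bs" "C \<in> Bs" "C - B = {i}" "i \<in> X"
  shows "card (X \<inter> B) \<le> card (X \<inter> C)"
proof -
  have "card (B \<inter> C) + card (B - C) = card (C \<inter> B) + card (C - B)"
    using card_basis[OF assms(1)] card_basis[OF assms(2)] by (metis card_Int_Diff finite)
  then have "card (B - C) = 1" using assms(3) by (simp add: Int_commute)
  have "X \<inter> B \<subseteq> (X \<inter> B \<inter> C) \<union> (B - C)" by auto
  then have "card (X \<inter> B) \<le> card (X \<inter> B \<inter> C) + card (B - C)"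
    by (meson card_Un_le card_mono finite le_trans)
  also have "\<dots> = card (insert i (X \<inter> B \<inter> C))"
    using \<open>card (B - C) = 1\<close> assms(3) by (subst card_insert_disjoint) auto
  also have "\<dots> \<le> card (X \<inter> C)" using assms(3,4) by (intro card_mono) auto
  finally show ?thesis .
qed

lemma mrank_contract:
  assumes "i \<notin> Y"
  shows "mrank (contract Bs i) Y + mrank Bs {i} = mrank Bs (insert i Y)"
proof (cases "\<exists>B\<in>Bs. i \<in> B")
  case True
  then have D: "contract Bs i = (\<lambda>B. B - {i}) ` {B\<in>Bs. i \<in> B}" by (auto simp: contract_def)
  have rank_i: "mrank Bs {i} = 1" using True mrank_singleton by simp
  have card_insert: "card (insert i Y \<inter> B) = Suc (card (Y \<inter> (B - {i})))" if "i \<in> B" for B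
  proof -
    have "insert i Y \<inter> B = insert i (Y \<inter> (B - {i}))" using that by auto
    then show ?thesis by simp
  qed
  show ?thesis
  proof (rule antisym)
    obtain B where "B \<in> Bs" "i \<in> B" "mrank (contract Bs i) Y = card (Y \<inter> (B - {i}))"
      using mrank_attained[of "contract Bs i" Y] D True by auto
    then show "mrank (contract Bs i) Y + mrank Bs {i} \<le> mrank Bs (insert i Y)"
      using card_insert card_Int_le_mrank[of B Bs "insert i Y"] rank_i by simp
  next
    obtain B where B: "B \<in> Bs" "mrank Bs (insert i Y) = card (insert i Y \<inter> B)"
      using mrank_attained[OF bases_nonempty] by blast
    obtain C where C: "C \<in> Bs" "i \<in> C" "card (insert i Y \<inter> B) \<le> card (insert i Y \<inter> C)"
    proof (cases "i \<in> B")
      case True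
      then show ?thesis using that B by blast
    next
      case False
      then obtain C where "C \<in> Bs" "C - B = {i}"
        using exists_basis_Diff_eq_singleton B \<open>\<exists>B\<in>Bs. i \<in> B\<close> by blast
      moreover have "card (insert i Y \<inter> B) \<le> card (insert i Y \<inter> C)"
        using B(1) \<open>C \<in> Bs\<close> \<open>C - B = {i}\<close> by (intro card_Int_le_of_Diff_eq_singleton) auto
      ultimately show ?thesis using that by blast
    qed
    have "C - {i} \<in> contract Bs i" using D C by auto
    then have "card (Y \<inter> (C - {i})) \<le> mrank (contract Bs i) Y" by (rule card_Int_le_mrank)
    then show "mrank Bs (insert i Y) \<le> mrank (contract Bs i) Y + mrank Bs {i}"
      using B C card_insert[OF C(2)] rank_i by simp
  qed
next
  case False
  then have "contract Bs i = Bs" by (auto simp: contract_def)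
  moreover have "mrank Bs {i} = 0" using False mrank_singleton by simp
  moreover have "(\<lambda>B. card (insert i Y \<inter> B)) ` Bs = (\<lambda>B. card (Y \<inter> B)) ` Bs"
    using False by (intro image_cong) auto
  ultimately show ?thesis unfolding mrank_def by simp
qed

end

section \<open>Integer vectors\<close>

lemma indv_empty [simp]: "indv {} = 0"
  by (simp add: indv_def fun_eq_iff)

lemma indv_insert: "i \<notin> I \<Longrightarrow> indv (insert i I) = indv {i} + indv I"
  by (simp add: indv_def fun_eq_iff)

lemma sum_indv: "finite A \<Longrightarrow> (\<Sum>j\<in>A. indv I j) = int (card (A \<inter> I))"
  by (simp add: indv_def sum.If_cases)

definition l1_norm :: "('a::finite \<Rightarrow> int) \<Rightarrow> int" where
  "l1_norm \<alpha> = (\<Sum>j\<in>UNIV. \<bar>\<alpha> j\<bar>)"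

lemma abs_le_l1_norm: "\<bar>\<alpha> j\<bar> \<le> l1_norm \<alpha>"
  unfolding l1_norm_def by (rule member_le_sum) auto

lemma l1_norm_nonneg: "0 \<le> l1_norm \<alpha>"
  unfolding l1_norm_def by (simp add: sum_nonneg)

lemma eq_if_same_unit_increments:
  fixes g h :: "('a::finite \<Rightarrow> int) \<Rightarrow> int"
  assumes zero: "g 0 = h 0"
    and step: "\<And>\<alpha> i. g (\<alpha> + indv {i}) - g \<alpha> = h (\<alpha> + indv {i}) - h \<alpha>"
  shows "g = h"
proof
  fix \<alpha>
  show "g \<alpha> = h \<alpha>"
  proof (induction "nat (l1_norm \<alpha>)" arbitrary: \<alpha> rule: less_induct)
    case less
    show ?case
    proof (cases "\<alpha> = 0")
      case True
      then show ?thesis using zero by simp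
    next
      case False
      then obtain j where "\<alpha> j \<noteq> 0" by (auto simp: fun_eq_iff)
      define \<beta> where "\<beta> = (if 0 < \<alpha> j then \<alpha> - indv {j} else \<alpha> + indv {j})"
      have "l1_norm \<beta> < l1_norm \<alpha>"
        unfolding l1_norm_def \<beta>_def using \<open>\<alpha> j \<noteq> 0\<close>
        by (intro sum_strict_mono_ex1) (auto simp: indv_def)
      then have "g \<beta> = h \<beta>" using less l1_norm_nonneg[of \<beta>] by simp
      then show ?thesis using step[of \<beta> j] step[of \<alpha> j] by (auto simp: \<beta>_def split: if_splits)
    qed
  qed
qed

lemma increment_induct:
  fixes \<gamma> \<alpha> :: "'a::finite \<Rightarrow> int"
  assumes "\<gamma> \<le> \<alpha>" "\<forall>j. j \<notin> S \<longrightarrow> \<gamma> j = \<alpha> j" "P \<gamma>"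
    and step: "\<And>\<beta> i. P \<beta> \<Longrightarrow> i \<in> S \<Longrightarrow> P (\<beta> + indv {i})"
  shows "P \<alpha>"
  using assms(1-3)
proof (induction "nat (\<Sum>j\<in>UNIV. \<alpha> j - \<gamma> j)" arbitrary: \<gamma> rule: less_induct)
  case less
  show ?case
  proof (cases "\<gamma> = \<alpha>")
    case True
    then show ?thesis using less.prems by simp
  next
    case False
    then obtain i where "\<gamma> i < \<alpha> i" using less.prems(1) by (auto simp: fun_eq_iff le_fun_def less_le)
    then have "i \<in> S" using less.prems(2) by auto
    let ?\<gamma>' = "\<gamma> + indv {i}"
    have "?\<gamma>' \<le> \<alpha>" using less.prems(1) \<open>\<gamma> i < \<alpha> i\<close> by (auto simp: le_fun_def indv_def)
    moreover have "\<forall>j. j \<notin> S \<longrightarrow> ?\<gamma>' j = \<alpha> j" using less.prems(2) \<open>i \<in> S\<close> by (auto simp: indv_def)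
    moreover have "(\<Sum>j\<in>UNIV. \<alpha> j - ?\<gamma>' j) = (\<Sum>j\<in>UNIV. \<alpha> j - \<gamma> j) - 1"
      by (simp add: sum_subtractf sum.distrib sum_indv)
    moreover have "0 < (\<Sum>j\<in>UNIV. \<alpha> j - \<gamma> j)"
      using less.prems(1) \<open>\<gamma> i < \<alpha> i\<close> by (intro sum_pos2[of _ i]) (auto simp: le_fun_def)
    ultimately have "nat (\<Sum>j\<in>UNIV. \<alpha> j - ?\<gamma>' j) < nat (\<Sum>j\<in>UNIV. \<alpha> j - \<gamma> j)" by simp
    then show ?thesis
      using less.hyps \<open>?\<gamma>' \<le> \<alpha>\<close> \<open>\<forall>j. j \<notin> S \<longrightarrow> ?\<gamma>' j = \<alpha> j\<close> step[OF less.prems(3) \<open>i \<in> S\<close>]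
      by blast
  qed
qed

section \<open>The layer potential\<close>

definition cap :: "('a \<Rightarrow> int) \<Rightarrow> int \<Rightarrow> 'a \<Rightarrow> int" where
  "cap \<alpha> t = (\<lambda>j. min (\<alpha> j) t)"

definition superlevel :: "('a \<Rightarrow> int) \<Rightarrow> int \<Rightarrow> 'a set" where
  "superlevel \<alpha> t = {j. t < \<alpha> j}"

definition layer_rank :: "(('a::finite \<Rightarrow> int) \<Rightarrow> 'a set set) \<Rightarrow> ('a \<Rightarrow> int) \<Rightarrow> int \<Rightarrow> int" where
  "layer_rank M \<alpha> t = int (mrank (M (cap \<alpha> t)) (superlevel \<alpha> t))"

(* Since cap \<alpha> t + indv (superlevel \<alpha> t) = cap \<alpha> (t + 1), this telescopes the recursion
   of g along the chain from cap \<alpha> L (the constant vector L, whose g-value is L d) up to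
   cap \<alpha> U = \<alpha>. *)
definition layer_sum ::
    "nat \<Rightarrow> (('a::finite \<Rightarrow> int) \<Rightarrow> 'a set set) \<Rightarrow> int \<Rightarrow> int \<Rightarrow> ('a \<Rightarrow> int) \<Rightarrow> int" where
  "layer_sum d M L U \<alpha> = L * int d + (\<Sum>t\<in>{L..<U}. layer_rank M \<alpha> t)"

definition layer_potential :: "nat \<Rightarrow> (('a::finite \<Rightarrow> int) \<Rightarrow> 'a set set) \<Rightarrow> ('a \<Rightarrow> int) \<Rightarrow> int" where
  "layer_potential d M \<alpha> = layer_sum d M (- l1_norm \<alpha>) (l1_norm \<alpha>) \<alpha>"

lemma cap_add_indv_superlevel: "cap \<alpha> t + indv (superlevel \<alpha> t) = cap \<alpha> (t + 1)"
  by (auto simp: fun_eq_iff cap_def indv_def superlevel_def)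

lemma layer_sum_Suc:
  "L \<le> U \<Longrightarrow> layer_sum d M L (U + 1) \<alpha> = layer_sum d M L U \<alpha> + layer_rank M \<alpha> U"
proof -
  assume "L \<le> U"
  then have "{L..<U + 1} = insert U {L..<U}" by auto
  then show ?thesis unfolding layer_sum_def by simp
qed

lemma layer_rank_add_unit_below:
  assumes "t < \<alpha> i"
  shows "layer_rank M (\<alpha> + indv {i}) t = layer_rank M \<alpha> t"
proof -
  have "cap (\<alpha> + indv {i}) t = cap \<alpha> t" "superlevel (\<alpha> + indv {i}) t = superlevel \<alpha> t"
    using assms by (auto simp: fun_eq_iff cap_def superlevel_def indv_def)
  then show ?thesis unfolding layer_rank_def by simp
qed

lemma layer_potential_zero: "layer_potential d M 0 = 0"
  unfolding layer_potential_def layer_sum_def l1_norm_def by simp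

section \<open>Matroid flocks\<close>

definition nu_objective :: "(('a::finite \<Rightarrow> int) \<Rightarrow> 'a set set) \<Rightarrow> 'a set \<Rightarrow> ('a \<Rightarrow> int) \<Rightarrow> int" where
  "nu_objective M B \<alpha> = (\<Sum>i\<in>B. \<alpha> i) - flock_g M \<alpha>"

lemma nu_objective_le_flock_nu: "ereal (of_int (nu_objective M B \<alpha>)) \<le> flock_nu M B"
  unfolding flock_nu_def nu_objective_def by (rule SUP_upper) simp

lemma flock_nu_less_infinity_iff: "flock_nu M B < \<infinity> \<longleftrightarrow> (\<exists>c. \<forall>\<alpha>. nu_objective M B \<alpha> \<le> c)"
proof
  assume "flock_nu M B < \<infinity>"
  then obtain n :: nat where n: "flock_nu M B < ereal (real n)"
    using less_PInf_Ex_of_nat by auto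
  have "nu_objective M B \<alpha> < int n" for \<alpha>
  proof -
    have "ereal (of_int (nu_objective M B \<alpha>)) < ereal (of_int (int n))"
      using order.strict_trans1[OF nu_objective_le_flock_nu n] by simp
    then show ?thesis by simp
  qed
  then show "\<exists>c. \<forall>\<alpha>. nu_objective M B \<alpha> \<le> c" by (meson less_imp_le)
next
  assume "\<exists>c. \<forall>\<alpha>. nu_objective M B \<alpha> \<le> c"
  then obtain c where c: "\<And>\<alpha>. nu_objective M B \<alpha> \<le> c" by blast
  have "flock_nu M B \<le> ereal (of_int c)"
    unfolding flock_nu_def
  proof (rule SUP_least)
    show "ereal (of_int (sum \<alpha> B - flock_g M \<alpha>)) \<le> ereal (of_int c)" for \<alpha>
      using c[of \<alpha>] unfolding nu_objective_def by (simp only: ereal_less_eq(3) of_int_le_iff)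
  qed
  then show "flock_nu M B < \<infinity>" using order.strict_trans1 by fastforce
qed

context
  fixes M :: "('a::finite \<Rightarrow> int) \<Rightarrow> 'a set set" and d :: nat
  assumes flock: "matroid_flock d M"
begin

lemma flock_matroid: "matroid_rank_d UNIV d (M \<alpha>)"
  using flock unfolding matroid_flock_def by blast

lemma flock_contract_eq_delete: "contract (M \<alpha>) i = delete (M (\<alpha> + indv {i})) i"
proof -
  have "\<alpha> + indv {i} = (\<lambda>j. \<alpha> j + unitv i j)" by (simp add: fun_eq_iff unitv_def indv_def)
  then show ?thesis using flock unfolding matroid_flock_def by simp
qed

lemma flock_mrank_insert:
  assumes "i \<notin> Y"
  shows "mrank (M \<alpha>) (insert i Y) = mrank (M \<alpha>) {i} + mrank (M (\<alpha> + indv {i})) Y"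
  using mrank_contract[OF flock_matroid assms, of \<alpha>] mrank_delete[OF flock_matroid assms]
  by (simp add: flock_contract_eq_delete)

lemma flock_mrank_insert_diff:
  assumes "j \<notin> I"
  shows "int (mrank (M \<alpha>) (insert j I)) - int (mrank (M \<alpha>) I) = int (mrank (M (\<alpha> + indv I)) {j})"
  using finite[of I] assms
proof (induction I arbitrary: \<alpha> rule: finite_induct)
  case empty
  then show ?case using mrank_empty[OF flock_matroid] by simp
next
  case (insert i I)
  let ?\<beta> = "\<alpha> + indv {i}"
  have "i \<notin> insert j I" using insert by auto
  then have "mrank (M \<alpha>) (insert j (insert i I)) = mrank (M \<alpha>) {i} + mrank (M ?\<beta>) (insert j I)"
    using flock_mrank_insert[of i "insert j I" \<alpha>] by (simp add: insert_commute)
  moreover have "mrank (M \<alpha>) (insert i I) = mrank (M \<alpha>) {i} + mrank (M ?\<beta>) I"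
    using flock_mrank_insert[OF insert(2)] .
  moreover have "?\<beta> + indv I = \<alpha> + indv (insert i I)"
    by (simp add: indv_insert[OF insert(2)] add.assoc)
  moreover have "int (mrank (M ?\<beta>) (insert j I)) - int (mrank (M ?\<beta>) I) = int (mrank (M (?\<beta> + indv I)) {j})"
    by (rule insert.IH) (use insert.prems in simp)
  ultimately show ?case by (simp add: plus_fun_def)
qed

lemma layer_sum_lower_irrelevant:
  assumes "L' \<le> L" "\<forall>j. L \<le> \<alpha> j" "L \<le> U"
  shows "layer_sum d M L' U \<alpha> = layer_sum d M L U \<alpha>"
  using assms(1)
proof (induction L' rule: int_le_induct)
  case (step L')
  have "L' - 1 < \<alpha> j" for j using step.hyps assms(2)[rule_format, of j] by linarith
  then have "superlevel \<alpha> (L' - 1) = UNIV" unfolding superlevel_def by blast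
  then have "layer_rank M \<alpha> (L' - 1) = int d"
    unfolding layer_rank_def using mrank_UNIV[OF flock_matroid] by simp
  moreover have "{L' - 1..<U} = insert (L' - 1) {L'..<U}" using step.hyps assms(3) by auto
  ultimately show ?case using step.IH unfolding layer_sum_def by (simp add: algebra_simps)
qed simp

lemma layer_sum_upper_irrelevant:
  assumes "U \<le> U'" "\<forall>j. \<alpha> j \<le> U" "L \<le> U"
  shows "layer_sum d M L U' \<alpha> = layer_sum d M L U \<alpha>"
  using assms(1)
proof (induction U' rule: int_ge_induct)
  case (step U')
  have "\<alpha> j \<le> U'" for j using step.hyps assms(2)[rule_format, of j] by linarith
  then have "superlevel \<alpha> U' = {}" unfolding superlevel_def by (simp add: not_less)
  then have "layer_rank M \<alpha> U' = 0"
    unfolding layer_rank_def using mrank_empty[OF flock_matroid] by simp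
  moreover have "L \<le> U'" using step.hyps assms(3) by linarith
  ultimately show ?case using step.IH layer_sum_Suc[of L U' d M \<alpha>] by simp
qed simp

lemma layer_potential_eq_layer_sum:
  assumes "\<forall>j. L \<le> \<alpha> j \<and> \<alpha> j \<le> U"
  shows "layer_potential d M \<alpha> = layer_sum d M L U \<alpha>"
proof -
  have bounds: "- l1_norm \<alpha> \<le> \<alpha> j \<and> \<alpha> j \<le> l1_norm \<alpha>" for j
    using abs_le_l1_norm[of \<alpha> j] by linarith
  have irrelevant: "layer_sum d M L' U' \<alpha> = layer_sum d M L U \<alpha>"
    if "L' \<le> L" "U \<le> U'" "\<forall>j. L \<le> \<alpha> j \<and> \<alpha> j \<le> U" for L U L' U'
  proof -
    have "L \<le> U" using that(3) by (meson order_trans)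
    then show ?thesis
      using layer_sum_lower_irrelevant[of L' L \<alpha> U'] layer_sum_upper_irrelevant[of U U' \<alpha> L] that
      by auto
  qed
  have "layer_sum d M (min L (- l1_norm \<alpha>)) (max U (l1_norm \<alpha>)) \<alpha> = layer_sum d M L U \<alpha>"
    using assms by (intro irrelevant) auto
  moreover have "layer_sum d M (min L (- l1_norm \<alpha>)) (max U (l1_norm \<alpha>)) \<alpha>
      = layer_sum d M (- l1_norm \<alpha>) (l1_norm \<alpha>) \<alpha>"
    using bounds by (intro irrelevant) auto
  ultimately show ?thesis unfolding layer_potential_def by simp
qed

lemma layer_rank_add_unit_at:
  "layer_rank M (\<alpha> + indv {i}) (\<alpha> i)
    = layer_rank M \<alpha> (\<alpha> i) + int (mrank (M (cap \<alpha> (\<alpha> i + 1))) {i})"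
proof -
  let ?S = "superlevel \<alpha> (\<alpha> i)"
  have "cap (\<alpha> + indv {i}) (\<alpha> i) = cap \<alpha> (\<alpha> i)"
    by (auto simp: fun_eq_iff cap_def indv_def)
  moreover have "superlevel (\<alpha> + indv {i}) (\<alpha> i) = insert i ?S"
    by (auto simp: superlevel_def indv_def)
  moreover have "i \<notin> ?S" by (simp add: superlevel_def)
  ultimately show ?thesis
    unfolding layer_rank_def
    using flock_mrank_insert_diff[of i ?S "cap \<alpha> (\<alpha> i)"] cap_add_indv_superlevel[of \<alpha> "\<alpha> i"]
    by simp
qed

lemma layer_rank_add_unit_above:
  assumes "\<alpha> i < t"
  shows "layer_rank M (\<alpha> + indv {i}) t
    = layer_rank M \<alpha> t + int (mrank (M (cap \<alpha> (t + 1))) {i}) - int (mrank (M (cap \<alpha> t)) {i})"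
proof -
  let ?S = "superlevel \<alpha> t"
  have "cap (\<alpha> + indv {i}) t = cap \<alpha> t + indv {i}"
    using assms by (auto simp: fun_eq_iff cap_def indv_def)
  moreover have "superlevel (\<alpha> + indv {i}) t = ?S"
    using assms by (auto simp: superlevel_def indv_def)
  moreover have "i \<notin> ?S" using assms by (simp add: superlevel_def)
  ultimately show ?thesis
    unfolding layer_rank_def
    using flock_mrank_insert[of i ?S "cap \<alpha> t"]
      flock_mrank_insert_diff[of i ?S "cap \<alpha> t"] cap_add_indv_superlevel[of \<alpha> t]
    by simp
qed

lemma layer_sum_add_unit:
  assumes "L \<le> \<alpha> i" "\<alpha> i < U"
  shows "layer_sum d M L U (\<alpha> + indv {i}) = layer_sum d M L U \<alpha> + int (mrank (M (cap \<alpha> U)) {i})"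
  using assms(2)
proof (induction U rule: int_gr_induct)
  case base
  have "layer_sum d M L (\<alpha> i) (\<alpha> + indv {i}) = layer_sum d M L (\<alpha> i) \<alpha>"
    unfolding layer_sum_def by (simp add: layer_rank_add_unit_below)
  then show ?case
    using layer_sum_Suc[OF assms(1), of d M] layer_rank_add_unit_at[of \<alpha> i]
    by (simp del: plus_fun_apply)
next
  case (step U)
  have "L \<le> U" using assms(1) step.hyps by linarith
  then show ?case
    using layer_sum_Suc[OF \<open>L \<le> U\<close>, of d M] step.IH layer_rank_add_unit_above[of \<alpha> i, OF step.hyps]
    by (simp del: plus_fun_apply)
qed

lemma layer_potential_add_unit:
  "layer_potential d M (\<alpha> + indv {i}) = layer_potential d M \<alpha> + int (mrank (M \<alpha>) {i})"
proof -
  let ?L = "- l1_norm \<alpha>" and ?U = "l1_norm \<alpha> + 1"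
  have bounds: "?L \<le> \<alpha> j \<and> \<alpha> j < ?U" for j
    using abs_le_l1_norm[of \<alpha> j] by linarith
  have "?L \<le> (\<alpha> + indv {i}) j \<and> (\<alpha> + indv {i}) j \<le> ?U" for j
    using bounds[of j] by (cases "j = i") (auto simp: indv_def)
  then have "\<forall>j. ?L \<le> (\<alpha> + indv {i}) j \<and> (\<alpha> + indv {i}) j \<le> ?U" by blast
  moreover have "\<forall>j. ?L \<le> \<alpha> j \<and> \<alpha> j \<le> ?U" using bounds by (simp add: order_less_imp_le)
  moreover have "cap \<alpha> ?U = \<alpha>" using bounds by (simp add: fun_eq_iff cap_def order_less_imp_le)
  ultimately show ?thesis
    using layer_potential_eq_layer_sum layer_sum_add_unit[of ?L \<alpha> i ?U] bounds[of i] by simp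
qed

lemma layer_potential_add_indv:
  "layer_potential d M (\<alpha> + indv I) = layer_potential d M \<alpha> + int (mrank (M \<alpha>) I)"
  using finite[of I]
proof (induction I arbitrary: \<alpha> rule: finite_induct)
  case empty
  then show ?case using mrank_empty[OF flock_matroid] by simp
next
  case (insert i I)
  have "\<alpha> + indv (insert i I) = (\<alpha> + indv {i}) + indv I"
    by (simp add: indv_insert[OF insert(2)] add.assoc)
  then have "layer_potential d M (\<alpha> + indv (insert i I))
      = layer_potential d M (\<alpha> + indv {i}) + int (mrank (M (\<alpha> + indv {i})) I)"
    using insert.IH[of "\<alpha> + indv {i}"] by (simp only:)
  then show ?case
    using layer_potential_add_unit[of \<alpha> i] flock_mrank_insert[OF insert(2), of \<alpha>]
    by (simp del: plus_fun_apply)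
qed

lemma flock_g_eq_layer_potential: "flock_g M = layer_potential d M"
  unfolding flock_g_def
proof (rule the_equality)
  show "layer_potential d M (\<lambda>_. 0) = 0 \<and>
      (\<forall>\<alpha> I. layer_potential d M (\<lambda>j. \<alpha> j + indv I j)
        = layer_potential d M \<alpha> + int (mrank (M \<alpha>) I))"
    using layer_potential_zero layer_potential_add_indv
    by (simp add: zero_fun_def plus_fun_def)
next
  fix g
  assume g: "g (\<lambda>_. 0) = 0 \<and> (\<forall>\<alpha> I. g (\<lambda>j. \<alpha> j + indv I j) = g \<alpha> + int (mrank (M \<alpha>) I))"
  show "g = layer_potential d M"
  proof (rule eq_if_same_unit_increments)
    show "g 0 = layer_potential d M 0"
      using g layer_potential_zero by (simp add: zero_fun_def)
    show "g (\<alpha> + indv {i}) - g \<alpha> = layer_potential d M (\<alpha> + indv {i}) - layer_potential d M \<alpha>"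
      for \<alpha> i
      using g layer_potential_add_indv by (simp add: plus_fun_def)
  qed
qed

lemma flock_g_add_indv: "flock_g M (\<alpha> + indv I) = flock_g M \<alpha> + int (mrank (M \<alpha>) I)"
  by (simp add: flock_g_eq_layer_potential layer_potential_add_indv)

lemma flock_g_zero: "flock_g M 0 = 0"
  by (simp add: flock_g_eq_layer_potential layer_potential_zero)

lemma nu_objective_add_unit:
  "nu_objective M B (\<gamma> + indv {i})
    = nu_objective M B \<gamma> + (if i \<in> B then 1 else 0) - int (mrank (M \<gamma>) {i})"
  unfolding nu_objective_def
  by (simp add: flock_g_add_indv sum.distrib sum_indv)

lemma basis_add_unit:
  assumes "B \<in> M \<gamma>" "i \<in> B"
  shows "B \<in> M (\<gamma> + indv {i})"
proof -
  have "B - {i} \<in> contract (M \<gamma>) i"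
    using assms unfolding contract_def by auto
  then have "B - {i} \<in> delete (M (\<gamma> + indv {i})) i"
    by (simp add: flock_contract_eq_delete)
  show ?thesis
  proof (cases "\<exists>B'\<in>M (\<gamma> + indv {i}). i \<notin> B'")
    case True
    then have "B - {i} \<in> M (\<gamma> + indv {i})"
      using \<open>B - {i} \<in> delete _ i\<close> unfolding delete_def by auto
    then have "card (B - {i}) = card B"
      using card_basis[OF flock_matroid] assms(1) by metis
    then show ?thesis using card_Diff1_less[of B i] assms(2) by simp
  next
    case False
    then obtain B' where "B' \<in> M (\<gamma> + indv {i})" "B - {i} = B' - {i}" "i \<in> B'"
      using \<open>B - {i} \<in> delete _ i\<close> unfolding delete_def by auto
    then show ?thesis using assms(2) by (metis insert_Diff)
  qed
qed

(* Raise the coordinates in B first (B stays a basis, the objective is constant),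
   then the others (the objective never increases). *)
lemma nu_objective_le_above_basis:
  assumes "B \<in> M \<beta>" "\<beta> \<le> \<alpha>"
  shows "nu_objective M B \<alpha> \<le> nu_objective M B \<beta>"
proof -
  define \<beta>' where "\<beta>' = (\<lambda>j. if j \<in> B then \<alpha> j else \<beta> j)"
  have "\<beta> \<le> \<beta>'" "\<beta>' \<le> \<alpha>" using assms(2) by (auto simp: \<beta>'_def le_fun_def)
  have "B \<in> M \<beta>' \<and> nu_objective M B \<beta>' = nu_objective M B \<beta>"
  proof (rule increment_induct[where P = "\<lambda>\<gamma>. B \<in> M \<gamma> \<and> nu_objective M B \<gamma> = nu_objective M B \<beta>"])
    fix \<gamma> i
    assume "B \<in> M \<gamma> \<and> nu_objective M B \<gamma> = nu_objective M B \<beta>" "i \<in> B"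
    moreover have "int (mrank (M \<gamma>) {i}) = 1"
      using calculation mrank_singleton[OF flock_matroid] by auto
    ultimately show "B \<in> M (\<gamma> + indv {i}) \<and> nu_objective M B (\<gamma> + indv {i}) = nu_objective M B \<beta>"
      using basis_add_unit nu_objective_add_unit by simp
  qed (use \<open>\<beta> \<le> \<beta>'\<close> assms(1) in \<open>auto simp: \<beta>'_def\<close>)
  moreover have "nu_objective M B \<alpha> \<le> nu_objective M B \<beta>'"
  proof (rule increment_induct[where P = "\<lambda>\<gamma>. nu_objective M B \<gamma> \<le> nu_objective M B \<beta>'"])
    fix \<gamma> i
    assume "nu_objective M B \<gamma> \<le> nu_objective M B \<beta>'" "i \<in> - B"
    then show "nu_objective M B (\<gamma> + indv {i}) \<le> nu_objective M B \<beta>'"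
      using nu_objective_add_unit by simp
  qed (use \<open>\<beta>' \<le> \<alpha>\<close> in \<open>auto simp: \<beta>'_def\<close>)
  ultimately show ?thesis by simp
qed

lemma nu_objective_add_indv_UNIV:
  assumes "card B = d"
  shows "nu_objective M B (\<alpha> + indv UNIV) = nu_objective M B \<alpha>"
  using assms mrank_UNIV[OF flock_matroid]
  unfolding nu_objective_def by (simp add: flock_g_add_indv sum.distrib sum_indv)

lemma nu_objective_add_of_nat:
  assumes "card B = d"
  shows "nu_objective M B (\<alpha> + of_nat K) = nu_objective M B \<alpha>"
proof (induction K)
  case (Suc K)
  have "\<alpha> + of_nat (Suc K) = (\<alpha> + of_nat K) + indv UNIV"
    by (simp add: fun_eq_iff indv_def)
  then show ?case
    by (simp only: nu_objective_add_indv_UNIV[OF assms] Suc.IH)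
qed simp

lemma nu_objective_le_at_basis:
  assumes "B \<in> M \<beta>"
  shows "nu_objective M B \<alpha> \<le> nu_objective M B \<beta>"
proof -
  define K where "K = nat (l1_norm (\<beta> - \<alpha>))"
  have "\<beta> j \<le> \<alpha> j + int K" for j
    using abs_le_l1_norm[of "\<beta> - \<alpha>" j] l1_norm_nonneg[of "\<beta> - \<alpha>"] by (simp add: K_def)
  then have "\<beta> \<le> \<alpha> + of_nat K" by (simp add: le_fun_def)
  then have "nu_objective M B (\<alpha> + of_nat K) \<le> nu_objective M B \<beta>"
    by (rule nu_objective_le_above_basis[OF assms])
  then show ?thesis
    using nu_objective_add_of_nat card_basis[OF flock_matroid assms] by simp
qed

lemma basis_in_support_bases:
  assumes "B \<in> M \<beta>"
  shows "B \<in> support_bases d M"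
  using nu_objective_le_at_basis[OF assms] card_basis[OF flock_matroid assms]
  unfolding support_bases_def flock_nu_less_infinity_iff by blast

lemma flock_g_multiple_indv_le:
  assumes "\<And>\<alpha>. int (mrank (M \<alpha>) B) \<le> r"
  shows "flock_g M (of_nat k * indv B) \<le> int k * r"
proof -
  (* Naming the vectors keeps the induction from eta-expanding of_nat k :: 'a \<Rightarrow> int. *)
  define v where "v k = (of_nat k * indv B :: 'a \<Rightarrow> int)" for k
  have "flock_g M (v k) \<le> int k * r"
  proof (induction k)
    case 0
    then show ?case using flock_g_zero by (simp add: v_def zero_fun_def)
  next
    case (Suc k)
    have "v (Suc k) = v k + indv B" by (simp add: v_def algebra_simps)
    then have "flock_g M (v (Suc k)) = flock_g M (v k) + int (mrank (M (v k)) B)"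
      by (simp add: flock_g_add_indv)
    then show ?case using Suc.IH assms[of "v k"] by (simp add: algebra_simps)
  qed
  then show ?thesis by (simp add: v_def)
qed

lemma support_basis_is_basis:
  assumes "B \<in> support_bases d M"
  shows "\<exists>\<alpha>. B \<in> M \<alpha>"
proof (rule ccontr)
  assume "\<nexists>\<alpha>. B \<in> M \<alpha>"
  moreover have "card B = d" and "\<exists>c. \<forall>\<alpha>. nu_objective M B \<alpha> \<le> c"
    using assms unfolding support_bases_def flock_nu_less_infinity_iff by auto
  ultimately have "int (mrank (M \<alpha>) B) \<le> int d - 1" for \<alpha>
    using mrank_less_card_if_not_basis[OF flock_matroid] by force
  then have "int k \<le> nu_objective M B (of_nat k * indv B)" for k
    using flock_g_multiple_indv_le[of B "int d - 1" k] \<open>card B = d\<close>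
    unfolding nu_objective_def by (simp add: indv_def algebra_simps)
  moreover obtain c where "\<And>\<alpha>. nu_objective M B \<alpha> \<le> c"
    using \<open>\<exists>c. \<forall>\<alpha>. nu_objective M B \<alpha> \<le> c\<close> by blast
  ultimately have "int (nat (c + 1)) \<le> c" by (meson order_trans)
  then show False by linarith
qed

end

theorem mainTheorem14:
  fixes M :: "('a::finite \<Rightarrow> int) \<Rightarrow> 'a set set" and d :: nat
  assumes "matroid_flock d M"
  shows "support_bases d M = (\<Union>\<alpha>. M \<alpha>)"
proof
  show "support_bases d M \<subseteq> (\<Union>\<alpha>. M \<alpha>)" using support_basis_is_basis[OF assms] by blast
  show "(\<Union>\<alpha>. M \<alpha>) \<subseteq> support_bases d M" using basis_in_support_bases[OF assms] by blast
qed

end
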